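(* Let $s\in\{1,2\}$, let $k,l\ge 0$ be integers, and let $\mathcal Q(k,l,1,s,1)$ be the set of lattice paths with steps $(1,1)$ (up), $(s,0)$ (flat) and $(1,-1)$ (down), starting at $(0,0)$, having exactly $k+1$ up steps, $k$ down steps and $l$ flat steps (so ending at $(2k+sl+1,1)$). Then (whenever the denominators are nonzero): (1) For each $i=1,\dots,k+1$, the number of such paths that start with an up step and have exactly $i$ up steps starting on or below the $x$-axis is $\frac{1}{k+1}\binom{2k+l}{2k}\binom{2k}{k}$. (2) For each $i=1,\dots,k$, the number of such paths that start with a down step and have exactly $i$ down steps starting on or below the $x$-axis is $\frac1k\binom{2k+l}{2k}\binom{2k}{k-1}$. (3) For each $i=1,\dots,l$, the number of such paths that start with a flat step and have exactly $i$ flat steps starting on or below the $x$-axis is $\frac1l\binom{2k+l}{k}\binom{k+l}{k+1}$. (4) For each $i=1,\dots,k+l+1$, the number of such paths that start with an up or flat step and have exactly $i$ up-or-flat steps starting on or below the $x$-axis is $\frac{1}{k+l+1}\binom{2k+l}{k}\binom{k+l+1}{k+1}$. (5) For each $i=1,\dots,k+l$, the number of such paths that start with a down or flat step and have exactly $i$ down-or-flat steps starting on or below the $x$-axis is $\frac{1}{k+l}\binom{2k+l}{k+1}\binom{k+l}{k}$. (6) For each $i=1,\dots,2k+1$, the number of such paths that start with an up or down step and have exactly $i$ up-or-down steps starting on or below the $x$-axis is $\frac{1}{2k+1}\binom{2k+l}{2k}\binom{2k+1}{k}$. (7) For each $i=1,\dots,2k+l+1$, the number of such paths with exactly $i$ vertices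 on or below the $x$-axis is $\frac{1}{2k+l+1}\binom{2k+l+1}{2k+1}\binom{2k+1}{k}$.
   Context: A step starts on or below the $x$-axis if its initial vertex has $y$-coordinate $\le 0$; a vertex is on or below the $x$-axis if its $y$-coordinate is $\le 0$ (the final vertex, at height $1$, is never counted). *)

theory Defs
  imports Complex_Main
begin

text \<open>A lattice path is the list of its steps, each an integer vector.
  Steps: up (1,1), flat (s,0), down (1,-1). Paths start at (0,0).\<close>

definition up_step :: "int \<times> int" where "up_step = (1, 1)"
definition down_step :: "int \<times> int" where "down_step = (1, -1)"
definition flat_step :: "int \<Rightarrow> int \<times> int" where "flat_step s = (s, 0)"

definition Qpaths :: "nat \<Rightarrow> nat \<Rightarrow> int \<Rightarrow> (int \<times> int) list set" where
  "Qpaths k l s = {p. set p \<subseteq> {up_step, flat_step s, down_step}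
      \<and> count_list p up_step = k + 1
      \<and> count_list p down_step = k
      \<and> count_list p (flat_step s) = l}"

text \<open>y-coordinate of the j-th vertex (vertex 0 is the origin); step j
  (0-indexed) starts at vertex j.\<close>
definition ht :: "(int \<times> int) list \<Rightarrow> nat \<Rightarrow> int" where
  "ht p j = (\<Sum>st \<leftarrow> take j p. snd st)"

definition nlow :: "(int \<times> int) set \<Rightarrow> (int \<times> int) list \<Rightarrow> nat" where
  "nlow S p = card {j. j < length p \<and> p ! j \<in> S \<and> ht p j \<le> 0}"

text \<open>Number of vertices on or below the x-axis (final vertex not counted).\<close>
definition nvert :: "(int \<times> int) list \<Rightarrow> nat" where
  "nvert p = card {j. j < length p \<and> ht p j \<le> 0}"

end

theory Submission
  imports Defs "HOL-Combinatorics.Multiset_Permutations"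
begin

text \<open>Cycle lemma. Let \<open>n\<close> be the length of a path of total height 1 and tilt it, giving
  vertex \<open>u < n\<close> the value \<open>n \<cdot> h(u) - u\<close>. The tilted heights are pairwise distinct, and in
  the rotation of the path that starts at vertex \<open>j\<close>, vertex \<open>u\<close> lies on or below the axis
  exactly when its tilted height is at most that of \<open>j\<close>. Hence, if the path has \<open>N\<close> steps
  from a set \<open>S\<close>, then among its rotations starting with an \<open>S\<close>-step the number of \<open>S\<close>-steps
  starting on or below the axis takes each value \<open>1, \<dots>, N\<close> exactly once. Counting pairs
  (path, rotation) shows that each value is attained by \<open>|Q|/n = (2k+l)!/((k+1)! k! l!)\<close>
  paths of \<open>Q(k,l,1,s,1)\<close>, and each of the seven expressions is this number in disguise.\<close>

section \<open>Counting by rotations\<close>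

lemma mset_rotate [simp]: "mset (rotate n xs) = mset xs"
  by (metis mset_append rotate_drop_take union_commute append_take_drop_id)

lemma card_eq_mult_card_if_unique_rotation:
  fixes Q T :: "'a list set"
  assumes fin: "finite Q" and len: "\<And>p. p \<in> Q \<Longrightarrow> length p = n"
    and rot: "\<And>p j. p \<in> Q \<Longrightarrow> rotate j p \<in> Q" and TQ: "T \<subseteq> Q"
    and unique: "\<And>p. p \<in> Q \<Longrightarrow> \<exists>!j. j < n \<and> rotate j p \<in> T"
  shows "card Q = n * card T"
proof -
  let ?P = "Sigma Q (\<lambda>p. {j. j < n \<and> rotate j p \<in> T})"
  have "card {j. j < n \<and> rotate j p \<in> T} = 1" if p: "p \<in> Q" for p
  proof -
    obtain j where "{j. j < n \<and> rotate j p \<in> T} = {j}"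
      using unique[OF p] by blast
    then show ?thesis by simp
  qed
  then have "card ?P = card Q"
    using fin by simp
  moreover have "bij_betw (\<lambda>(p, j). (rotate j p, j)) ?P (T \<times> {..<n})"
  proof (rule bij_betw_byWitness[where f' = "\<lambda>(q, j). (rotate (n - j) q, j)"])
    have left_inv: "rotate (n - j) (rotate j p) = p" if "p \<in> Q" "j < n" for p j
      using that len[OF that(1)] by (simp add: rotate_rotate)
    have right_inv: "rotate j (rotate (n - j) q) = q" if "q \<in> Q" "j < n" for q j
      using that len[OF that(1)] by (simp add: rotate_rotate)
    show "\<forall>x\<in>?P. (\<lambda>(q, j). (rotate (n - j) q, j)) ((\<lambda>(p, j). (rotate j p, j)) x) = x"
      using left_inv by auto
    show "\<forall>y\<in>T \<times> {..<n}. (\<lambda>(p, j). (rotate j p, j)) ((\<lambda>(q, j). (rotate (n - j) q, j)) y) = y"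
      using right_inv TQ by auto
    show "(\<lambda>(p, j). (rotate j p, j)) ` ?P \<subseteq> T \<times> {..<n}"
      by auto
    show "(\<lambda>(q, j). (rotate (n - j) q, j)) ` (T \<times> {..<n}) \<subseteq> ?P"
      using right_inv TQ rot by auto
  qed
  then have "card ?P = card (T \<times> {..<n})"
    by (rule bij_betw_same_card)
  ultimately show ?thesis
    by (simp add: card_cartesian_product mult.commute)
qed

lemma bij_betw_rank:
  fixes f :: "'a \<Rightarrow> 'b::linorder"
  assumes fin: "finite A" and inj: "inj_on f A"
  shows "bij_betw (\<lambda>x. card {y \<in> A. f y \<le> f x}) A {1..card A}"
proof -
  let ?r = "\<lambda>x. card {y \<in> A. f y \<le> f x}"
  have less: "?r x < ?r x'" if "x \<in> A" "x' \<in> A" "f x < f x'" for x x'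
    by (rule psubset_card_mono) (use fin that in force)+
  have "inj_on ?r A"
  proof (rule inj_onI)
    fix x x' assume "x \<in> A" "x' \<in> A" "?r x = ?r x'"
    then show "x = x'"
      using less[of x x'] less[of x' x] inj_onD[OF inj] by (metis not_less_iff_gr_or_eq)
  qed
  moreover have "?r ` A \<subseteq> {1..card A}"
  proof (intro image_subsetI)
    fix x assume "x \<in> A"
    then have "x \<in> {y \<in> A. f y \<le> f x}" by simp
    then show "?r x \<in> {1..card A}"
      using fin by (auto intro: card_mono simp: Suc_le_eq card_gt_0_iff)
  qed
  ultimately show ?thesis
    unfolding bij_betw_def by (simp add: card_image card_subset_eq)
qed

lemma card_rotated_indices:
  fixes j n :: nat
  assumes "j < n"
  shows "card {t. t < n \<and> P ((j + t) mod n)} = card {u. u < n \<and> P u}"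
proof -
  have inverse: "((j + t) mod n + (n - j)) mod n = t" if "t < n" for t
  proof -
    have "((j + t) mod n + (n - j)) mod n = (j + t + (n - j)) mod n"
      by (simp only: mod_add_left_eq)
    also have "j + t + (n - j) = t + n"
      using assms by simp
    finally show ?thesis
      using that by simp
  qed
  show ?thesis
    by (rule bij_betw_same_card[of "\<lambda>t. (j + t) mod n"],
        rule bij_betw_byWitness[where f' = "\<lambda>u. (u + (n - j)) mod n"])
      (use assms inverse in \<open>auto simp: mod_add_right_eq\<close>)
qed

section \<open>Tilted heights and the cycle lemma\<close>

lemma ht_rotate:
  assumes j: "j < length p" and t: "t < length p"
  shows "ht (rotate j p) t = ht p ((j + t) mod length p) - ht p j
           + (if j + t < length p then 0 else sum_list (map snd p))"
proof -
  have r: "rotate j p = drop j p @ take j p"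
    using j by (simp add: rotate_drop_take)
  show ?thesis
  proof (cases "j + t < length p")
    case True
    have "take (j + t) p = take j p @ take t (drop j p)"
      by (simp add: take_add)
    then show ?thesis
      using True r unfolding ht_def by simp
  next
    case False
    have "(j + t) mod length p = j + t - length p"
      using False j t by (simp add: le_mod_geq)
    moreover have "take t (rotate j p) = drop j p @ take (j + t - length p) p"
      using False r j t by (simp add: add.commute)
    moreover have "sum_list (map snd p) = ht p j + sum_list (map snd (drop j p))"
      unfolding ht_def by (metis append_take_drop_id map_append sum_list_append)
    ultimately show ?thesis
      using False unfolding ht_def by simp
  qed
qed

definition tilted_ht :: "(int \<times> int) list \<Rightarrow> nat \<Rightarrow> int" where
  "tilted_ht p u = ht p u * int (length p) - int u"

lemma tilted_ht_le_iff:
  assumes u: "u < length p" and j: "j < length p"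
  shows "tilted_ht p u \<le> tilted_ht p j \<longleftrightarrow> (if j \<le> u then ht p u \<le> ht p j else ht p u < ht p j)"
proof -
  let ?n = "int (length p)"
  consider "ht p u < ht p j" | "ht p u = ht p j" | "ht p j < ht p u"
    by linarith
  then show ?thesis
  proof cases
    case 1
    then have "ht p u * ?n \<le> (ht p j - 1) * ?n"
      by (intro mult_right_mono) auto
    then show ?thesis
      using 1 u j unfolding tilted_ht_def by (auto simp: algebra_simps)
  next
    case 2
    then show ?thesis unfolding tilted_ht_def by auto
  next
    case 3
    then have "(ht p j + 1) * ?n \<le> ht p u * ?n"
      by (intro mult_right_mono) auto
    then show ?thesis
      using 3 u j unfolding tilted_ht_def by (auto simp: algebra_simps)
  qed
qed

lemma inj_on_tilted_ht: "inj_on (tilted_ht p) {..<length p}"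
proof (rule inj_onI)
  fix u v assume "u \<in> {..<length p}" "v \<in> {..<length p}" "tilted_ht p u = tilted_ht p v"
  then show "u = v"
    using tilted_ht_le_iff[of u p v] tilted_ht_le_iff[of v p u] by (auto split: if_splits)
qed

lemma ht_rotate_le_0_iff:
  assumes j: "j < length p" and t: "t < length p" and height: "sum_list (map snd p) = 1"
  shows "ht (rotate j p) t \<le> 0 \<longleftrightarrow> tilted_ht p ((j + t) mod length p) \<le> tilted_ht p j"
proof (cases "j + t < length p")
  case True
  then show ?thesis
    using ht_rotate[OF j t] tilted_ht_le_iff[of "j + t" p j] j by simp
next
  case False
  then have "(j + t) mod length p = j + t - length p" and "j + t - length p < j"
    using j t by (simp_all add: le_mod_geq)
  then show ?thesis
    using False ht_rotate[OF j t] tilted_ht_le_iff[of "j + t - length p" p j] j t height by auto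
qed

lemma nlow_rotate:
  assumes j: "j < length p" and height: "sum_list (map snd p) = 1"
  shows "nlow S (rotate j p) = card {u. u < length p \<and> p ! u \<in> S \<and> tilted_ht p u \<le> tilted_ht p j}"
proof -
  have "nlow S (rotate j p) =
      card {t. t < length p \<and> (\<lambda>u. p ! u \<in> S \<and> tilted_ht p u \<le> tilted_ht p j) ((j + t) mod length p)}"
    unfolding nlow_def using j height by (intro arg_cong[where f = card]) (auto simp: nth_rotate ht_rotate_le_0_iff)
  also have "\<dots> = card {u. u < length p \<and> p ! u \<in> S \<and> tilted_ht p u \<le> tilted_ht p j}"
    using card_rotated_indices[OF j, where P = "\<lambda>u. p ! u \<in> S \<and> tilted_ht p u \<le> tilted_ht p j"]
    by simp
  finally show ?thesis .
qed

lemma bij_betw_nlow_rotate: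
  fixes S :: "(int \<times> int) set"
  assumes height: "sum_list (map snd p) = 1"
  defines "A \<equiv> {j. j < length p \<and> p ! j \<in> S}"
  shows "bij_betw (\<lambda>j. nlow S (rotate j p)) A {1..card A}"
proof -
  have "inj_on (tilted_ht p) A"
    by (rule inj_on_subset[OF inj_on_tilted_ht]) (auto simp: A_def)
  then have rank: "bij_betw (\<lambda>j. card {u \<in> A. tilted_ht p u \<le> tilted_ht p j}) A {1..card A}"
    by (intro bij_betw_rank) (simp add: A_def)
  have nlow_eq: "nlow S (rotate j p) = card {u \<in> A. tilted_ht p u \<le> tilted_ht p j}" if "j \<in> A" for j
  proof -
    have "{u \<in> A. tilted_ht p u \<le> tilted_ht p j}
            = {u. u < length p \<and> p ! u \<in> S \<and> tilted_ht p u \<le> tilted_ht p j}"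
      by (auto simp: A_def)
    then show ?thesis
      using nlow_rotate[OF _ height, of j S] that by (simp add: A_def)
  qed
  show ?thesis
    by (subst bij_betw_cong[OF nlow_eq]) (use rank in auto)
qed

lemma unique_rotation_nlow:
  assumes height: "sum_list (map snd p) = 1"
    and i: "i \<in> {1..card {j. j < length p \<and> p ! j \<in> S}}"
  shows "\<exists>!j. j < length p \<and> hd (rotate j p) \<in> S \<and> nlow S (rotate j p) = i"
proof -
  let ?A = "{j. j < length p \<and> p ! j \<in> S}"
  have bij: "bij_betw (\<lambda>j. nlow S (rotate j p)) ?A {1..card ?A}"
    by (rule bij_betw_nlow_rotate[OF height])
  have "p \<noteq> []"
    using height by auto
  then have starts_in_S: "j < length p \<and> hd (rotate j p) \<in> S \<longleftrightarrow> j \<in> ?A" for j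
    by (auto simp: hd_rotate_conv_nth)
  have "i \<in> (\<lambda>j. nlow S (rotate j p)) ` ?A"
    using bij i by (simp add: bij_betw_def)
  then obtain j where j: "j \<in> ?A" "nlow S (rotate j p) = i"
    by blast
  moreover have "j' = j" if "j' \<in> ?A" "nlow S (rotate j' p) = i" for j'
    by (rule inj_onD[OF bij_betw_imp_inj_on[OF bij]]) (use that j in auto)
  ultimately show ?thesis
    using starts_in_S by blast
qed

lemma card_eq_length_mult_card_nlow:
  fixes Q :: "(int \<times> int) list set"
  assumes fin: "finite Q" and len: "\<And>p. p \<in> Q \<Longrightarrow> length p = n"
    and rot: "\<And>p j. p \<in> Q \<Longrightarrow> rotate j p \<in> Q"
    and height: "\<And>p. p \<in> Q \<Longrightarrow> sum_list (map snd p) = 1"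
    and N: "\<And>p. p \<in> Q \<Longrightarrow> card {j. j < n \<and> p ! j \<in> S} = N"
    and i: "i \<in> {1..N}"
  shows "card Q = n * card {p \<in> Q. p \<noteq> [] \<and> hd p \<in> S \<and> nlow S p = i}"
proof (rule card_eq_mult_card_if_unique_rotation[OF fin len rot])
  fix p assume p: "p \<in> Q"
  have "\<exists>!j. j < n \<and> hd (rotate j p) \<in> S \<and> nlow S (rotate j p) = i"
    using unique_rotation_nlow[OF height[OF p], of i S] N[OF p] len[OF p] i by simp
  moreover have "rotate j p \<noteq> []" for j
    using height[OF p] by auto
  ultimately show "\<exists>!j. j < n \<and> rotate j p \<in> {p \<in> Q. p \<noteq> [] \<and> hd p \<in> S \<and> nlow S p = i}"
    using rot[OF p] by simp
qed auto

section \<open>Paths with \<open>k+1\<close> up, \<open>k\<close> down and \<open>l\<close> flat steps\<close>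

lemma step_distinct [simp]:
  "up_step \<noteq> down_step" "up_step \<noteq> flat_step s" "down_step \<noteq> flat_step s"
  "down_step \<noteq> up_step" "flat_step s \<noteq> up_step" "flat_step s \<noteq> down_step"
  by (auto simp: up_step_def down_step_def flat_step_def)

definition path_steps :: "nat \<Rightarrow> nat \<Rightarrow> int \<Rightarrow> (int \<times> int) multiset" where
  "path_steps k l s =
     replicate_mset (k + 1) up_step + replicate_mset k down_step + replicate_mset l (flat_step s)"

lemma Qpaths_eq_permutations_of_multiset:
  "Qpaths k l s = permutations_of_multiset (path_steps k l s)"
proof (intro set_eqI iffI)
  fix p assume p: "p \<in> Qpaths k l s"
  have "count (mset p) x = count (path_steps k l s) x" for x
  proof (cases "x \<in> {up_step, flat_step s, down_step}")
    case True
    then show ?thesis using p unfolding Qpaths_def path_steps_def by (auto simp: count_mset)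
  next
    case False
    then have "x \<notin> set p" using p unfolding Qpaths_def by auto
    then show ?thesis using False unfolding path_steps_def by (auto simp: count_mset)
  qed
  then show "p \<in> permutations_of_multiset (path_steps k l s)"
    by (intro permutations_of_multisetI multiset_eqI)
next
  fix p assume "p \<in> permutations_of_multiset (path_steps k l s)"
  then have m: "mset p = path_steps k l s" by (rule permutations_of_multisetD)
  then have "set p = set_mset (path_steps k l s)"
    by (metis set_mset_mset)
  then have "set p \<subseteq> {up_step, flat_step s, down_step}"
    unfolding path_steps_def by auto
  moreover have "count_list p x = count (path_steps k l s) x" for x
    using m by (metis count_mset)
  ultimately show "p \<in> Qpaths k l s"
    unfolding Qpaths_def path_steps_def by auto
qed

lemma Qpaths_iff_mset: "p \<in> Qpaths k l s \<longleftrightarrow> mset p = path_steps k l s"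
  by (simp add: Qpaths_eq_permutations_of_multiset permutations_of_multiset_def)

lemma finite_Qpaths: "finite (Qpaths k l s)"
  by (simp add: Qpaths_eq_permutations_of_multiset)

lemma length_Qpaths:
  assumes "p \<in> Qpaths k l s"
  shows "length p = 2 * k + l + 1"
proof -
  have "length p = size (path_steps k l s)"
    using assms by (metis Qpaths_iff_mset size_mset)
  then show ?thesis
    by (simp add: path_steps_def)
qed

lemma rotate_Qpaths: "p \<in> Qpaths k l s \<Longrightarrow> rotate j p \<in> Qpaths k l s"
  by (simp add: Qpaths_iff_mset)

lemma final_height_Qpaths:
  assumes "p \<in> Qpaths k l s"
  shows "sum_list (map snd p) = 1"
proof -
  have "sum_list (map snd p) = sum_mset (image_mset snd (mset p))"
    by (metis mset_map sum_mset_sum_list)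
  then show ?thesis
    using assms by (simp add: Qpaths_iff_mset path_steps_def up_step_def down_step_def flat_step_def)
qed

lemma filter_mset_replicate_mset:
  "filter_mset P (replicate_mset n a) = (if P a then replicate_mset n a else {#})"
  by (induction n) auto

lemma card_steps_in_Qpaths:
  assumes p: "p \<in> Qpaths k l s"
  shows "card {j. j < 2 * k + l + 1 \<and> p ! j \<in> S} =
    (if up_step \<in> S then k + 1 else 0) + (if down_step \<in> S then k else 0) + (if flat_step s \<in> S then l else 0)"
proof -
  have "card {j. j < 2 * k + l + 1 \<and> p ! j \<in> S} = length (filter (\<lambda>x. x \<in> S) p)"
    using length_Qpaths[OF p] by (simp add: length_filter_conv_card)
  also have "\<dots> = size {#x \<in># mset p. x \<in> S#}"
    by (metis mset_filter size_mset)
  also have "\<dots> = size {#x \<in># path_steps k l s. x \<in> S#}"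
    using p by (simp add: Qpaths_iff_mset)
  finally show ?thesis
    by (simp add: path_steps_def filter_mset_replicate_mset)
qed

lemma card_Qpaths: "card (Qpaths k l s) * (fact (k + 1) * fact k * fact l) = fact (2 * k + l + 1)"
proof -
  let ?M = "path_steps k l s"
  have "(\<Prod>x\<in>set_mset ?M. fact (count ?M x)) = (\<Prod>x\<in>{up_step, down_step, flat_step s}. fact (count ?M x))"
    by (rule prod.mono_neutral_left) (auto simp: path_steps_def not_in_iff)
  also have "\<dots> = fact (k + 1) * fact k * fact l"
    by (simp add: path_steps_def mult.assoc del: fact_Suc)
  finally have prod: "(\<Prod>x\<in>set_mset ?M. fact (count ?M x)) = fact (k + 1) * fact k * fact l" .
  have size: "size ?M = 2 * k + l + 1"
    by (simp add: path_steps_def)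
  show ?thesis
    using card_permutations_of_multiset_aux[of ?M]
    unfolding prod size Qpaths_eq_permutations_of_multiset .
qed

lemma card_Qpaths_nlow:
  assumes i: "i \<in> {1..(if up_step \<in> S then k + 1 else 0) + (if down_step \<in> S then k else 0)
                   + (if flat_step s \<in> S then l else 0)}"
  shows "real (card {p \<in> Qpaths k l s. p \<noteq> [] \<and> hd p \<in> S \<and> nlow S p = i})
           = fact (2 * k + l) / (fact (k + 1) * fact k * fact l)"
proof -
  let ?T = "{p \<in> Qpaths k l s. p \<noteq> [] \<and> hd p \<in> S \<and> nlow S p = i}"
  have "card (Qpaths k l s) = (2 * k + l + 1) * card ?T"
    by (rule card_eq_length_mult_card_nlow[OF finite_Qpaths length_Qpaths rotate_Qpaths final_height_Qpaths
          card_steps_in_Qpaths i])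
  then have "(2 * k + l + 1) * (card ?T * (fact (k + 1) * fact k * fact l)) = fact (2 * k + l + 1)"
    using card_Qpaths[of k l s] by (simp only: mult.assoc)
  also have "fact (2 * k + l + 1) = (2 * k + l + 1) * (fact (2 * k + l) :: nat)"
    by simp
  finally have "card ?T * (fact (k + 1) * fact k * fact l) = (fact (2 * k + l) :: nat)"
    by (simp only: mult_left_cancel[of "2 * k + l + 1"])
  then have "real (card ?T * (fact (k + 1) * fact k * fact l)) = fact (2 * k + l)"
    by (metis of_nat_fact)
  then show ?thesis
    by (simp add: eq_divide_eq del: fact_Suc)
qed

lemma card_Qpaths_nvert:
  assumes "i \<in> {1..2 * k + l + 1}"
  shows "real (card {p \<in> Qpaths k l s. nvert p = i}) = fact (2 * k + l) / (fact (k + 1) * fact k * fact l)"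
proof -
  have "{p \<in> Qpaths k l s. nvert p = i} = {p \<in> Qpaths k l s. p \<noteq> [] \<and> hd p \<in> UNIV \<and> nlow UNIV p = i}"
    using length_Qpaths[of _ k l s] by (fastforce simp: nvert_def nlow_def)
  then show ?thesis
    using card_Qpaths_nlow[of i UNIV k s l] assms by simp
qed

lemma multinomial_as_binomial_products:
  fixes k l :: nat
  defines "M \<equiv> fact (2 * k + l) / (fact (k + 1) * fact k * fact l) :: real"
  shows "M = 1 / real (k+1) * real ((2*k+l) choose (2*k)) * real ((2*k) choose k)"
    and "0 < k \<Longrightarrow> M = 1 / real k * real ((2*k+l) choose (2*k)) * real ((2*k) choose (k-1))"
    and "0 < l \<Longrightarrow> M = 1 / real l * real ((2*k+l) choose k) * real ((k+l) choose (k+1))"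
    and "M = 1 / real (k+l+1) * real ((2*k+l) choose k) * real ((k+l+1) choose (k+1))"
    and "0 < k + l \<Longrightarrow> M = 1 / real (k+l) * real ((2*k+l) choose (k+1)) * real ((k+l) choose k)"
    and "M = 1 / real (2*k+1) * real ((2*k+l) choose (2*k)) * real ((2*k+1) choose k)"
    and "M = 1 / real (2*k+l+1) * real ((2*k+l+1) choose (2*k+1)) * real ((2*k+1) choose k)"
  unfolding M_def
  by (simp_all add: binomial_fact divide_simps fact_reduce[of k] fact_reduce[of l] fact_reduce[of "k+l"]
        del: fact_Suc binomial_Suc_Suc)
    (auto simp: algebra_simps fact_reduce[of "k+l"])

theorem theorem9:
  fixes k l :: nat and s :: int
  assumes "s \<in> {1, 2}"
  shows
  "(\<forall>i \<in> {1..k+1}. real (card {p \<in> Qpaths k l s. p \<noteq> [] \<and> hd p = up_step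
        \<and> nlow {up_step} p = i})
      = 1 / real (k+1) * real ((2*k+l) choose (2*k)) * real ((2*k) choose k))
 \<and> (\<forall>i \<in> {1..k}. real (card {p \<in> Qpaths k l s. p \<noteq> [] \<and> hd p = down_step
        \<and> nlow {down_step} p = i})
      = 1 / real k * real ((2*k+l) choose (2*k)) * real ((2*k) choose (k-1)))
 \<and> (\<forall>i \<in> {1..l}. real (card {p \<in> Qpaths k l s. p \<noteq> [] \<and> hd p = flat_step s
        \<and> nlow {flat_step s} p = i})
      = 1 / real l * real ((2*k+l) choose k) * real ((k+l) choose (k+1)))
 \<and> (\<forall>i \<in> {1..k+l+1}. real (card {p \<in> Qpaths k l s. p \<noteq> [] \<and> hd p \<in> {up_step, flat_step s}
        \<and> nlow {up_step, flat_step s} p = i})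
      = 1 / real (k+l+1) * real ((2*k+l) choose k) * real ((k+l+1) choose (k+1)))
 \<and> (\<forall>i \<in> {1..k+l}. real (card {p \<in> Qpaths k l s. p \<noteq> [] \<and> hd p \<in> {down_step, flat_step s}
        \<and> nlow {down_step, flat_step s} p = i})
      = 1 / real (k+l) * real ((2*k+l) choose (k+1)) * real ((k+l) choose k))
 \<and> (\<forall>i \<in> {1..2*k+1}. real (card {p \<in> Qpaths k l s. p \<noteq> [] \<and> hd p \<in> {up_step, down_step}
        \<and> nlow {up_step, down_step} p = i})
      = 1 / real (2*k+1) * real ((2*k+l) choose (2*k)) * real ((2*k+1) choose k))
 \<and> (\<forall>i \<in> {1..2*k+l+1}. real (card {p \<in> Qpaths k l s. nvert p = i})
      = 1 / real (2*k+l+1) * real ((2*k+l+1) choose (2*k+1)) * real ((2*k+1) choose k))"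
  \<comment> \<open>The counts do not depend on \<open>s\<close>.\<close>
  apply (intro conjI ballI)
  subgoal for i using card_Qpaths_nlow[of i "{up_step}" k s l]
      multinomial_as_binomial_products(1)[where k = k and l = l] by simp
  subgoal for i using card_Qpaths_nlow[of i "{down_step}" k s l]
      multinomial_as_binomial_products(2)[where k = k and l = l] by simp
  subgoal for i using card_Qpaths_nlow[of i "{flat_step s}" k s l]
      multinomial_as_binomial_products(3)[where k = k and l = l] by simp
  subgoal for i using card_Qpaths_nlow[of i "{up_step, flat_step s}" k s l]
      multinomial_as_binomial_products(4)[where k = k and l = l] by simp
  subgoal for i using card_Qpaths_nlow[of i "{down_step, flat_step s}" k s l]
      multinomial_as_binomial_products(5)[where k = k and l = l] by (simp; linarith)
  subgoal for i using card_Qpaths_nlow[of i "{up_step, down_step}" k s l]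
      multinomial_as_binomial_products(6)[where k = k and l = l] by simp
  subgoal for i using card_Qpaths_nvert[of i k l s]
      multinomial_as_binomial_products(7)[where k = k and l = l] by simp
  done

end
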